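(* Let $p,\varepsilon\in(0,1)$ be real numbers and let $S$ be a set of $m$ vectors in a real vector space with $\dim\operatorname{span}(S)\le D$. Let $S_p$ be the random subset of $S$ containing each element independently with probability $p$. Then \[ \mathbb P\big(|S\cap\operatorname{span}(S_p)|<\varepsilon m\big)\le\mathbb P(X\le D), \] where $X\sim\mathrm{Bin}(m,(1-\varepsilon)p)$. *)

theory Defs
  imports "HOL-Analysis.Analysis" "HOL-Probability.Probability"
begin

definition random_subset :: "'a set \<Rightarrow> real \<Rightarrow> 'a set pmf" where
  "random_subset S p = map_pmf (\<lambda>f. {x \<in> S. f x}) (Pi_pmf S False (\<lambda>_. bernoulli_pmf p))"

end

theory Submission
  imports Defs
begin

(* Reveal the elements of S one at a time, keeping track of the span W of the elements
   selected so far. An element outside span W is selected with probability p, and each such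
   selection raises dim W by one, which can happen at most D times. Every element that ends
   up outside span S_p was outside span W when it was revealed and was not selected. Hence
   |S - span S_p| >= k requires k failures before the (D+1)-st success in a sequence of
   independent Bernoulli(p) trials.
   It remains to compare this negative binomial tail at k = floor((1-eps) m) + 1 with
   P(Bin(m, (1-eps) p) <= D). Interpolate the tail linearly in k: moving the interpolation
   point from (1-eps) m to (1-eps)(m+1) is dominated by one step of the recursion
   Bin(m+1) = Bin(m) + Bernoulli((1-eps) p), so induction on m gives the bound. *)

lemma dim_subset_finite:
  fixes U V :: "'a::real_vector set"
  assumes "finite V" "U \<subseteq> V"
  shows "dim U \<le> dim V"
proof -
  obtain B where B: "B \<subseteq> V" "independent B" "V \<subseteq> span B" "card B = dim V"
    using basis_exists by blast
  have "U \<subseteq> span B"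
    using assms(2) B(3) by (rule order_trans)
  moreover have "finite B"
    using assms(1) B(1) by (rule rev_finite_subset)
  ultimately show ?thesis
    using dim_le_card B(4) by metis
qed

lemma dim_insert_notin_span:
  fixes W :: "'a::real_vector set"
  assumes "finite W" "x \<notin> span W"
  shows "dim (insert x W) = Suc (dim W)"
proof -
  obtain B where B: "B \<subseteq> W" "independent B" "W \<subseteq> span B" "card B = dim W"
    using basis_exists by blast
  have "finite B"
    using assms(1) B(1) by (rule rev_finite_subset)
  have "span B \<subseteq> span W"
    using B(1) by (rule span_mono)
  with assms(2) have "x \<notin> span B"
    by blast
  then have "card (insert x B) = dim (insert x W)"
  proof (intro basis_card_eq_dim)
    show "insert x B \<subseteq> insert x W"
      using B(1) by blast
    show "insert x W \<subseteq> span (insert x B)"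
      using B(3) span_mono[of B "insert x B"] span_base[of x "insert x B"] by blast
    show "independent (insert x B)"
      using \<open>x \<notin> span B\<close> B(2) by (rule independent_insertI)
  qed
  moreover have "x \<notin> B"
    using \<open>x \<notin> span B\<close> span_base by blast
  ultimately show ?thesis
    using \<open>finite B\<close> B(4) by simp
qed

lemma dim_budget_insert_notin_span:
  fixes W S :: "'a::real_vector set"
  assumes "finite W" "finite S" "x \<notin> span W" "dim (W \<union> insert x S) \<le> dim W + s"
  obtains s' where "s = Suc s'" "dim (insert x W \<union> S) \<le> dim (insert x W) + s'"
proof -
  have "insert x W \<union> S = W \<union> insert x S"
    by auto
  moreover have "dim (insert x W) = Suc (dim W)"
    using assms(1,3) by (rule dim_insert_notin_span)
  moreover have "dim (insert x W) \<le> dim (insert x W \<union> S)"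
    using assms(1,2) by (intro dim_subset_finite) auto
  ultimately show ?thesis
    using assms(4) that by (cases s) auto
qed

lemma measure_pmf_bind_bernoulli:
  assumes "0 \<le> p" "p \<le> 1"
  shows "measure_pmf.prob (bernoulli_pmf p \<bind> N) A =
    p * measure_pmf.prob (N True) A + (1 - p) * measure_pmf.prob (N False) A"
proof -
  have "measure_pmf.prob (bernoulli_pmf p \<bind> N) A =
      (\<integral>b. measure_pmf.prob (N b) A \<partial>bernoulli_pmf p)"
    unfolding measure_pmf_bind
    by (rule measure_pmf.measure_bind[where N="count_space UNIV"]) (auto simp: measure_subprob)
  then show ?thesis
    using assms by (simp add: mult.commute)
qed

lemma prob_binomial_pmf_Suc_atMost:
  assumes "0 \<le> q" "q \<le> 1"
  shows "measure_pmf.prob (binomial_pmf (Suc n) q) {..s} =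
    (1 - q) * measure_pmf.prob (binomial_pmf n q) {..s} + q * measure_pmf.prob (binomial_pmf n q) {..<s}"
proof -
  have "binomial_pmf (Suc n) q =
      bernoulli_pmf q \<bind> (\<lambda>b. map_pmf (\<lambda>k. (if b then 1 else 0) + k) (binomial_pmf n q))"
    using assms by (simp add: binomial_pmf_Suc map_pmf_def)
  moreover have "(+) (Suc 0) -` {..s} = {..<s}" "(+) 0 -` {..s} = {..s}"
    by auto
  ultimately show ?thesis
    using assms by (simp add: measure_pmf_bind_bernoulli)
qed

lemma random_subset_empty [simp]: "random_subset {} p = return_pmf {}"
  by (simp add: random_subset_def)

lemma random_subset_insert:
  assumes "finite S" "x \<notin> S"
  shows "random_subset (insert x S) p =
    bernoulli_pmf p \<bind> (\<lambda>b. map_pmf (\<lambda>T. if b then insert x T else T) (random_subset S p))"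
  unfolding random_subset_def using assms
  by (auto simp: Pi_pmf_insert' map_bind_pmf map_pmf_def bind_assoc_pmf bind_return_pmf
      intro!: bind_pmf_cong)

lemma prob_random_subset_insert:
  assumes "finite S" "x \<notin> S" "0 \<le> p" "p \<le> 1"
  shows "measure_pmf.prob (random_subset (insert x S) p) {T. P T} =
    p * measure_pmf.prob (random_subset S p) {T. P (insert x T)} +
    (1 - p) * measure_pmf.prob (random_subset S p) {T. P T}"
  using assms by (simp add: random_subset_insert measure_pmf_bind_bernoulli vimage_def)

lemma prob_card_insert_Diff_le:
  assumes "finite S"
  shows "measure_pmf.prob M {T. k \<le> card (insert x S - A T)} \<le>
    measure_pmf.prob M {T. k - 1 \<le> card (S - A T)}"
proof (rule measure_pmf.finite_measure_mono)
  have card_le: "card (insert x S - B) \<le> Suc (card (S - B))" for B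
  proof -
    have "card (insert x S - B) \<le> card (insert x (S - B))"
      using assms by (intro card_mono) auto
    also have "\<dots> \<le> Suc (card (S - B))"
      using assms by (simp add: card_insert_if)
    finally show ?thesis .
  qed
  then have "k - 1 \<le> card (S - A T)" if "k \<le> card (insert x S - A T)" for T
    using that card_le[of "A T"] by linarith
  then show "{T. k \<le> card (insert x S - A T)} \<subseteq> {T. k - 1 \<le> card (S - A T)}"
    by blast
qed simp

(* negbin_tail p k s is the probability that k failures occur before the (s+1)-st success in
   independent Bernoulli(p) trials, i.e. P(Bin(k + s, p) <= s); negbin_tail_less lowers s by one,
   just as {..<s} relates to {..s}. *)
fun negbin_tail :: "real \<Rightarrow> nat \<Rightarrow> nat \<Rightarrow> real" where
  "negbin_tail p 0 s = 1"
| "negbin_tail p (Suc k) 0 = (1 - p) * negbin_tail p k 0"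
| "negbin_tail p (Suc k) (Suc s) = p * negbin_tail p (Suc k) s + (1 - p) * negbin_tail p k (Suc s)"

definition negbin_tail_less :: "real \<Rightarrow> nat \<Rightarrow> nat \<Rightarrow> real" where
  "negbin_tail_less p k s = (case s of 0 \<Rightarrow> 0 | Suc s' \<Rightarrow> negbin_tail p k s')"

lemma negbin_tail_Suc_fail:
  "negbin_tail p (Suc k) s = p * negbin_tail_less p (Suc k) s + (1 - p) * negbin_tail p k s"
  by (cases s) (auto simp: negbin_tail_less_def)

lemma negbin_tail_first_trial:
  "negbin_tail p k (Suc s) = p * negbin_tail p k s + (1 - p) * negbin_tail p (k - 1) (Suc s)"
  by (cases k) (simp_all add: algebra_simps)

lemma negbin_tail_nonneg: "0 \<le> p \<Longrightarrow> p \<le> 1 \<Longrightarrow> 0 \<le> negbin_tail p k s"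
  by (induction p k s rule: negbin_tail.induct) auto

lemma negbin_tail_mono_succ:
  assumes "0 \<le> p" "p \<le> 1"
  shows "negbin_tail p k s \<le> negbin_tail p k (Suc s)"
proof (induction k arbitrary: s)
  case 0
  then show ?case by simp
next
  case (Suc k)
  have IH: "negbin_tail p k s \<le> negbin_tail p k (Suc s)" for s
    by (rule Suc.IH)
  show ?case
  proof (induction s)
    case 0
    have "negbin_tail p (Suc k) 0 \<le> (1 - p) * negbin_tail p k 1"
      using IH[of 0] assms by (simp add: mult_left_mono)
    then show ?case
      using negbin_tail_nonneg[OF assms] assms by (simp add: add_increasing)
  next
    case (Suc s)
    then show ?case
      using IH[of "Suc s"] assms
      by (simp add: add_mono mult_left_mono)
  qed
qed

lemma negbin_tail_antimono_fail:
  assumes "0 \<le> p" "p \<le> 1"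
  shows "negbin_tail p (Suc k) s \<le> negbin_tail p k s"
proof (induction s)
  case 0
  then show ?case
    using negbin_tail_nonneg[OF assms, of k 0] assms by (simp add: mult_left_le_one_le)
next
  case (Suc s)
  have "negbin_tail p (Suc k) (Suc s) \<le> p * negbin_tail p k (Suc s) + (1 - p) * negbin_tail p k (Suc s)"
    using Suc.IH negbin_tail_mono_succ[OF assms, of k s] assms by (simp add: add_mono mult_left_mono)
  then show ?case
    by (simp add: algebra_simps)
qed

lemma negbin_tail_less_antimono_fail:
  "0 \<le> p \<Longrightarrow> p \<le> 1 \<Longrightarrow> negbin_tail_less p (Suc k) s \<le> negbin_tail_less p k s"
  using negbin_tail_antimono_fail by (cases s) (auto simp: negbin_tail_less_def)

(* W spans the elements selected so far and s is the remaining dimension budget. *)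
lemma prob_card_outside_span_le_negbin_tail:
  fixes S W :: "'a::real_vector set"
  assumes "finite S" "finite W" "dim (W \<union> S) \<le> dim W + s" and p: "0 \<le> p" "p \<le> 1"
  shows "measure_pmf.prob (random_subset S p) {T. k \<le> card (S - span (W \<union> T))} \<le> negbin_tail p k s"
  using assms(1-3)
proof (induction S arbitrary: W k s rule: finite_induct)
  case empty
  then show ?case
    using negbin_tail_nonneg[OF p] by (cases k) auto
next
  case (insert x S)
  let ?prob = "\<lambda>W k. measure_pmf.prob (random_subset S p) {T. k \<le> card (S - span (W \<union> T))}"
  let ?selected = "measure_pmf.prob (random_subset S p) {T. k \<le> card (insert x S - span (W \<union> insert x T))}"
  let ?unselected = "measure_pmf.prob (random_subset S p) {T. k \<le> card (insert x S - span (W \<union> T))}"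
  have split: "measure_pmf.prob (random_subset (insert x S) p) {T. k \<le> card (insert x S - span (W \<union> T))} =
      p * ?selected + (1 - p) * ?unselected"
    using insert.hyps p by (rule prob_random_subset_insert)
  have "dim (W \<union> S) \<le> dim (W \<union> insert x S)"
    using insert.hyps(1) insert.prems(1) by (intro dim_subset_finite) auto
  with insert.prems have IH_W: "?prob W k' \<le> negbin_tail p k' s" for k'
    using insert.IH by simp
  show ?case
  proof (cases "x \<in> span W")
    case True
    then have "x \<in> span (W \<union> T)" for T
      using span_mono[of W "W \<union> T"] by blast
    then have "span (W \<union> insert x T) = span (W \<union> T)"
      and "insert x S - span (W \<union> T) = S - span (W \<union> T)" for T
      using span_redundant[of x "W \<union> T"] by auto
    then have "?selected = ?prob W k" "?unselected = ?prob W k"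
      by simp_all
    then show ?thesis
      unfolding split using IH_W[of k] by (simp add: algebra_simps)
  next
    case False
    obtain s' where s: "s = Suc s'" and "dim (insert x W \<union> S) \<le> dim (insert x W) + s'"
      using dim_budget_insert_notin_span[OF insert.prems(1) insert.hyps(1) False insert.prems(2)] .
    then have "?prob (insert x W) k \<le> negbin_tail p k s'"
      using insert.IH[of "insert x W" s' k] insert.prems(1) by simp
    moreover have "insert x S - span (W \<union> insert x T) = S - span (insert x W \<union> T)" for T
      using span_base[of x "insert x W \<union> T"] by auto
    ultimately have "?selected \<le> negbin_tail p k s'"
      by simp
    moreover have "?unselected \<le> negbin_tail p (k - 1) s"
      using prob_card_insert_Diff_le[OF insert.hyps(1)] IH_W[of "k - 1"] by (rule order_trans)
    ultimately have "p * ?selected + (1 - p) * ?unselected \<le>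
        p * negbin_tail p k s' + (1 - p) * negbin_tail p (k - 1) s"
      using p by (intro add_mono mult_left_mono) auto
    then show ?thesis
      unfolding split s negbin_tail_first_trial[of p k s'] .
  qed
qed

(* Piecewise linear interpolation of a sequence, meant for x >= 0 (nat truncates below). *)
definition lin_interp :: "(nat \<Rightarrow> real) \<Rightarrow> real \<Rightarrow> real" where
  "lin_interp h x = (1 - frac x) * h (nat \<lfloor>x\<rfloor>) + frac x * h (Suc (nat \<lfloor>x\<rfloor>))"

lemma lin_interp_0 [simp]: "lin_interp h 0 = h 0"
  by (simp add: lin_interp_def)

lemma lin_interp_eq:
  assumes "real k \<le> x" "x < real k + 1"
  shows "lin_interp h x = (1 - (x - real k)) * h k + (x - real k) * h (Suc k)"
proof -
  have "\<lfloor>x\<rfloor> = int k"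
    using assms by (simp add: floor_eq_iff)
  then show ?thesis
    by (simp add: lin_interp_def frac_def)
qed

lemma lin_interp_ge_Suc_floor:
  assumes "h (Suc (nat \<lfloor>x\<rfloor>)) \<le> h (nat \<lfloor>x\<rfloor>)"
  shows "h (Suc (nat \<lfloor>x\<rfloor>)) \<le> lin_interp h x"
proof -
  have "0 \<le> (1 - frac x) * (h (nat \<lfloor>x\<rfloor>) - h (Suc (nat \<lfloor>x\<rfloor>)))"
    using assms frac_lt_1[of x] by simp
  then show ?thesis
    by (simp add: lin_interp_def algebra_simps)
qed

lemma lin_interp_shift_le:
  fixes f g :: "nat \<Rightarrow> real"
  assumes drop: "\<And>k. c * (f k - g k) \<le> f k - f (Suc k)"
    and drop_Suc: "\<And>k. c * (f (Suc k) - g (Suc k)) \<le> f k - f (Suc k)"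
    and "0 \<le> x" "0 \<le> d" "d \<le> 1"
  shows "lin_interp f (x + d) \<le> lin_interp f x - d * c * (lin_interp f x - lin_interp g x)"
proof -
  define k where "k = nat \<lfloor>x\<rfloor>"
  define t where "t = x - real k"
  have k: "real k \<le> x" "x < real k + 1" and t: "0 \<le> t" "t < 1"
    using \<open>0 \<le> x\<close> unfolding k_def t_def by linarith+
  define P0 P1 where "P0 = c * (f k - g k)" and "P1 = c * (f (Suc k) - g (Suc k))"
  define A B where "A = f k - f (Suc k)" and "B = f (Suc k) - f (Suc (Suc k))"
  have "P0 \<le> A" "P1 \<le> A" "P1 \<le> B"
    unfolding P0_def P1_def A_def B_def using drop[of k] drop_Suc[of k] drop[of "Suc k"] by auto
  have fx: "lin_interp f x = (1 - t) * f k + t * f (Suc k)"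
    and gx: "lin_interp g x = (1 - t) * g k + t * g (Suc k)"
    using lin_interp_eq[OF k] unfolding t_def by simp_all
  have rhs: "lin_interp f x - d * c * (lin_interp f x - lin_interp g x) =
      (1 - t) * f k + t * f (Suc k) - d * ((1 - t) * P0 + t * P1)"
    unfolding fx gx P0_def P1_def by (simp add: algebra_simps)
  show ?thesis
  proof (cases "t + d < 1")
    case True
    have "lin_interp f (x + d) = (1 - t) * f k + t * f (Suc k) - d * A"
      using lin_interp_eq[of k "x + d"] True k \<open>0 \<le> d\<close>
      unfolding t_def A_def by (simp add: algebra_simps)
    moreover have "(1 - t) * P0 + t * P1 \<le> A"
      using convex_bound_le[of P0 A P1 "1 - t" t] \<open>P0 \<le> A\<close> \<open>P1 \<le> A\<close> t by simp
    ultimately show ?thesis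
      unfolding rhs using \<open>0 \<le> d\<close> by (simp add: mult_left_mono)
  next
    case False
    have "lin_interp f (x + d) = (1 - t) * f k + t * f (Suc k) - (1 - t) * A - (t + d - 1) * B"
      using lin_interp_eq[of "Suc k" "x + d"] False k \<open>d \<le> 1\<close> t
      unfolding t_def A_def B_def by (simp add: algebra_simps)
    moreover have "d * ((1 - t) * P0 + t * P1) =
        (1 - t) * (d * P0 + (1 - d) * P1) + (t + d - 1) * P1"
      by (simp add: algebra_simps)
    moreover have "d * P0 + (1 - d) * P1 \<le> A"
      using convex_bound_le[of P0 A P1 d "1 - d"] \<open>P0 \<le> A\<close> \<open>P1 \<le> A\<close> \<open>0 \<le> d\<close> \<open>d \<le> 1\<close>
      by simp
    then have "(1 - t) * (d * P0 + (1 - d) * P1) \<le> (1 - t) * A"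
      using t by (simp add: mult_left_mono)
    moreover have "(t + d - 1) * P1 \<le> (t + d - 1) * B"
      using \<open>P1 \<le> B\<close> False by (simp add: mult_left_mono)
    ultimately show ?thesis
      unfolding rhs by linarith
  qed
qed

lemma lin_interp_negbin_tail_le_binomial:
  assumes p: "0 \<le> p" "p \<le> 1" and d: "0 \<le> d" "d \<le> 1"
  shows "lin_interp (\<lambda>k. negbin_tail p k s) (d * real m) \<le>
    measure_pmf.prob (binomial_pmf m (d * p)) {..s}"
proof (induction m arbitrary: s)
  case 0
  have "d * p \<in> {0..1}"
    using p d by (auto intro: mult_le_one)
  then show ?case
    by (simp add: binomial_pmf_0)
next
  case (Suc m)
  define f g where "f = (\<lambda>k. negbin_tail p k s)" and "g = (\<lambda>k. negbin_tail_less p k s)"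
  have q: "0 \<le> d * p" "d * p \<le> 1"
    using p d by (auto intro: mult_le_one)
  have drop: "f k - f (Suc k) = p * (f k - g (Suc k))" for k
    unfolding f_def g_def by (simp add: negbin_tail_Suc_fail algebra_simps)
  have shift: "lin_interp f (d * real m + d) \<le>
      lin_interp f (d * real m) - d * p * (lin_interp f (d * real m) - lin_interp g (d * real m))"
  proof (rule lin_interp_shift_le)
    show "p * (f k - g k) \<le> f k - f (Suc k)" for k
      unfolding drop using negbin_tail_less_antimono_fail[OF p] p
      by (intro mult_left_mono) (auto simp: f_def g_def)
    show "p * (f (Suc k) - g (Suc k)) \<le> f k - f (Suc k)" for k
      unfolding drop using negbin_tail_antimono_fail[OF p] p
      by (intro mult_left_mono) (auto simp: f_def g_def)
  qed (use d in auto)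
  have "lin_interp f (d * real m) \<le> measure_pmf.prob (binomial_pmf m (d * p)) {..s}"
    unfolding f_def by (rule Suc.IH)
  moreover have "lin_interp g (d * real m) \<le> measure_pmf.prob (binomial_pmf m (d * p)) {..<s}"
  proof (cases s)
    case 0
    then show ?thesis
      by (simp add: g_def negbin_tail_less_def lin_interp_def)
  next
    case (Suc s')
    then show ?thesis
      using Suc.IH[of s'] by (simp add: g_def negbin_tail_less_def lessThan_Suc_atMost)
  qed
  ultimately have combined: "(1 - d * p) * lin_interp f (d * real m) + d * p * lin_interp g (d * real m) \<le>
      measure_pmf.prob (binomial_pmf (Suc m) (d * p)) {..s}"
    unfolding prob_binomial_pmf_Suc_atMost[OF q] using q by (intro add_mono mult_left_mono) auto
  have "lin_interp f (d * real (Suc m)) = lin_interp f (d * real m + d)"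
    by (simp add: algebra_simps)
  also have "\<dots> \<le> (1 - d * p) * lin_interp f (d * real m) + d * p * lin_interp g (d * real m)"
    using shift by (simp add: algebra_simps)
  also have "\<dots> \<le> measure_pmf.prob (binomial_pmf (Suc m) (d * p)) {..s}"
    by (rule combined)
  finally show ?case
    unfolding f_def .
qed

lemma Suc_nat_floor_le_card_Diff:
  assumes "finite S" "e \<le> 1" "real (card (S \<inter> A)) < e * real (card S)"
  shows "Suc (nat \<lfloor>(1 - e) * real (card S)\<rfloor>) \<le> card (S - A)"
proof -
  have "card (S - A) = card S - card (S \<inter> A)"
    using assms(1) by (simp add: card_Diff_subset_Int)
  moreover have "card (S \<inter> A) \<le> card S"
    using assms(1) by (intro card_mono) auto
  ultimately have "(1 - e) * real (card S) < real (card (S - A))"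
    using assms(3) by (simp add: algebra_simps)
  then have "\<lfloor>(1 - e) * real (card S)\<rfloor> < int (card (S - A))"
    by (simp add: floor_less_iff)
  moreover have "0 \<le> \<lfloor>(1 - e) * real (card S)\<rfloor>"
    using assms(2) by simp
  ultimately show ?thesis
    by (simp add: Suc_le_eq nat_less_iff)
qed

theorem lemma3p1:
  fixes S :: "'a::real_vector set" and m D :: nat and p \<epsilon> :: real
  assumes "0 < p" "p < 1" "0 < \<epsilon>" "\<epsilon> < 1"
    and "finite S" "card S = m"
    and "dim (span S) \<le> D"
  shows "measure_pmf.prob (random_subset S p) {T. real (card (S \<inter> span T)) < \<epsilon> * real m}
           \<le> measure_pmf.prob (binomial_pmf m ((1 - \<epsilon>) * p)) {..D}"
proof -
  have p: "0 \<le> p" "p \<le> 1" and d: "0 \<le> 1 - \<epsilon>" "1 - \<epsilon> \<le> 1"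
    using assms(1-4) by auto
  define F where "F = Suc (nat \<lfloor>(1 - \<epsilon>) * real m\<rfloor>)"
  have "measure_pmf.prob (random_subset S p) {T. real (card (S \<inter> span T)) < \<epsilon> * real m} \<le>
      measure_pmf.prob (random_subset S p) {T. F \<le> card (S - span T)}"
    using Suc_nat_floor_le_card_Diff[OF assms(5)] assms(4,6) unfolding F_def
    by (intro measure_pmf.finite_measure_mono) auto
  also have "\<dots> \<le> negbin_tail p F D"
    using prob_card_outside_span_le_negbin_tail[of S "{}" D p F] assms(5,7) p by simp
  also have "\<dots> \<le> lin_interp (\<lambda>k. negbin_tail p k D) ((1 - \<epsilon>) * real m)"
    unfolding F_def using negbin_tail_antimono_fail[OF p] by (rule lin_interp_ge_Suc_floor)
  also have "\<dots> \<le> measure_pmf.prob (binomial_pmf m ((1 - \<epsilon>) * p)) {..D}"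
    using p d by (rule lin_interp_negbin_tail_le_binomial)
  finally show ?thesis .
qed

end
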